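(* Let $p$ be a prime with $p\notin\{2,3,7,43\}$ such that none of the numbers $1+2p,\ 1+6p,\ 1+14p,\ 1+42p,\ 1+86p,\ 1+258p,\ 1+602p,\ 1+1806p$ is prime. Then $\mathcal{M}_p\subseteq\{1,2,6,42,1806\}\cup p\cdot\{1,2,6,42,1806\}$; in particular $\mathcal{M}_p$ is finite.
   Context: For positive integers $k,n$ let $S_k(n)=\sum_{i=1}^{n} i^k$. For an integer $a$, $\mathcal{M}_a$ denotes the set of positive integers $n$ such that $S_n(n)\equiv a\pmod{n}$. For a set $A$ of integers and an integer $c$, $c\cdot A=\{ca : a\in A\}$. *)

theory Defs
  imports Main "HOL-Computational_Algebra.Primes"
begin

definition S :: "nat \<Rightarrow> nat \<Rightarrow> int" where
  "S k n = (\<Sum>i=1..n. (int i) ^ k)"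

definition M :: "int \<Rightarrow> nat set" where
  "M a = {n. n > 0 \<and> S n n mod int n = a mod int n}"

definition scale_set :: "nat \<Rightarrow> nat set \<Rightarrow> nat set" where
  "scale_set c A = (\<lambda>a. c * a) ` A"

end

theory Submission
  imports Defs "HOL-Number_Theory.Number_Theory" "HOL-Computational_Algebra.Squarefree"
begin

text \<open>Let \<open>n \<in> M\<^sub>p\<close> and let \<open>q\<close> be a prime divisor of \<open>n\<close>. Cutting \<open>1..n\<close> into blocks of
length \<open>q\<close> gives \<open>S\<^sub>n(n) \<equiv> (n/q) S\<^sub>n(q)\<close> modulo \<open>q\<close>, and even modulo \<open>q\<^sup>2\<close> since \<open>q\<close> divides
the exponent; by a primitive root argument \<open>q\<close> divides \<open>S\<^sub>n(q)\<close> unless \<open>(q - 1) dvd n\<close>. As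
\<open>S\<^sub>n(n) \<equiv> p (mod q)\<close>, every prime \<open>q \<noteq> p\<close> dividing \<open>n\<close> satisfies \<open>\<not> q\<^sup>2 dvd n\<close> and
\<open>(q - 1) dvd n\<close>, and \<open>p\<^sup>2 dvd n\<close> forces \<open>(p - 1) dvd n\<close>. By induction over these primes they
all lie in \<open>{2, 3, 7, 43}\<close>: for any other one, \<open>q - 1\<close> would be a divisor of \<open>1806\<close> or \<open>p\<close>
times an even divisor of \<open>1806\<close>, both excluded by the hypotheses; likewise \<open>p\<^sup>2 dvd n\<close>
would make \<open>p - 1\<close> a divisor of \<open>1806\<close>. Finally the divisors \<open>d\<close> of
\<open>1806 = 2 \<cdot> 3 \<cdot> 7 \<cdot> 43\<close> with \<open>(q - 1) dvd d\<close> for all primes \<open>q dvd d\<close> are \<open>1, 2, 6, 42, 1806\<close>.\<close>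

lemma S_add: "S k (n + d) = S k n + (\<Sum>b=1..d. int (n + b) ^ k)"
proof (induction d)
  case 0
  then show ?case by simp
next
  case (Suc d)
  have "S k (n + Suc d) = S k (n + d) + int (n + Suc d) ^ k"
    unfolding S_def by (simp add: add_Suc_right)
  moreover have "(\<Sum>b=1..Suc d. int (n + b) ^ k) = (\<Sum>b=1..d. int (n + b) ^ k) + int (n + Suc d) ^ k"
    by (rule sum.cl_ivl_Suc[THEN trans]) simp
  ultimately show ?case using Suc by simp
qed

lemma S_mult_diff_dvd:
  assumes "\<And>c b. m dvd int (c * d + b) ^ k - int b ^ k"
  shows "m dvd S k (c * d) - int c * S k d"
proof (induction c)
  case 0
  then show ?case by (simp add: S_def)
next
  case (Suc c)
  have "m dvd (\<Sum>b=1..d. int (c * d + b) ^ k - int b ^ k)"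
    using assms by (intro dvd_sum)
  then have "m dvd (\<Sum>b=1..d. int (c * d + b) ^ k) - S k d"
    by (simp add: sum_subtractf S_def)
  with Suc have "m dvd (S k (c * d) - int c * S k d) + ((\<Sum>b=1..d. int (c * d + b) ^ k) - S k d)"
    by (rule dvd_add)
  moreover have "S k (Suc c * d) = S k (c * d) + (\<Sum>b=1..d. int (c * d + b) ^ k)"
    using S_add[of k "c * d" d] by (simp add: add.commute)
  ultimately show ?case by (simp add: algebra_simps)
qed

lemma dvd_power_diff: "x - y dvd x ^ k - (y ^ k :: 'a :: comm_ring_1)"
  by (simp add: power_diff_sumr2)

lemma square_dvd_power_diff:
  fixes x y d :: "'a :: comm_ring_1"
  assumes "d dvd x - y" and "d dvd of_nat k"
  shows "d ^ 2 dvd x ^ k - y ^ k"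
proof -
  have term_dvd: "d dvd y ^ (k - Suc i) * x ^ i - y ^ (k - 1)" if "i < k" for i
  proof -
    have "y ^ (k - Suc i) * x ^ i - y ^ (k - 1) = y ^ (k - Suc i) * (x ^ i - y ^ i)"
      using that by (simp add: algebra_simps flip: power_add)
    moreover have "d dvd x ^ i - y ^ i"
      using assms(1) dvd_power_diff by (rule dvd_trans)
    ultimately show ?thesis by simp
  qed
  have "d dvd (\<Sum>i<k. y ^ (k - Suc i) * x ^ i - y ^ (k - 1))"
    by (rule dvd_sum, rule term_dvd) simp
  then have "d dvd (\<Sum>i<k. y ^ (k - Suc i) * x ^ i) - of_nat k * y ^ (k - 1)"
    by (simp add: sum_subtractf)
  moreover have "d dvd of_nat k * y ^ (k - 1)"
    using assms(2) by simp
  ultimately have "d dvd (\<Sum>i<k. y ^ (k - Suc i) * x ^ i) - of_nat k * y ^ (k - 1) + of_nat k * y ^ (k - 1)"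
    by (rule dvd_add)
  then have "d dvd (\<Sum>i<k. y ^ (k - Suc i) * x ^ i)"
    by simp
  with assms(1) have "d * d dvd (x - y) * (\<Sum>i<k. y ^ (k - Suc i) * x ^ i)"
    by (rule mult_dvd_mono)
  then show ?thesis
    by (simp only: power2_eq_square power_diff_sumr2)
qed

lemma S_eq_sum_int: "S k n = (\<Sum>m=1..int n. m ^ k)"
proof -
  have "(\<Sum>m=1..int n. m ^ k) = (\<Sum>m\<in>int ` {1..n}. m ^ k)"
    by (simp add: image_int_atLeastAtMost)
  also have "\<dots> = S k n"
    by (simp add: sum.reindex S_def)
  finally show ?thesis ..
qed

lemma prime_dvd_S:
  assumes q: "prime q" and k: "\<not> (q - 1) dvd k"
  shows "int q dvd S k q"
proof -
  have "q > 1"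
    using q prime_gt_1_nat by blast
  then obtain g where "residue_primroot q g"
    using prime_primitive_root_exists q by blast
  then have cop: "coprime (int g) (int q)" and "ord q g = q - 1"
    using q by (auto simp: residue_primroot_def totient_prime coprime_commute)
  then have not_one: "\<not> [int g ^ k = 1] (mod int q)"
    using k by (metis cong_int_iff of_nat_1 of_nat_power ord_divides)
  define T where "T = (\<Sum>m\<in>{1..<int q}. m ^ k)"
  \<comment> \<open>multiplication by \<open>g\<close> permutes the nonzero residues, so \<open>T \<equiv> g\<^sup>k T\<close>\<close>
  have "T = (\<Sum>m\<in>{1..<int q}. (int g * m mod int q) ^ k)"
    unfolding T_def by (rule sum.reindex_bij_betw[OF bij_betw_int_remainders_mult[OF cop], symmetric])
  also have "[\<dots> = (\<Sum>m\<in>{1..<int q}. (int g * m) ^ k)] (mod int q)"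
    by (intro cong_sum cong_pow) simp
  also have "(\<Sum>m\<in>{1..<int q}. (int g * m) ^ k) = T * int g ^ k"
    unfolding T_def power_mult_distrib sum_distrib_right by (simp add: mult.commute)
  finally have "[T * int g ^ k = T * 1] (mod int q)"
    by (simp add: cong_sym_eq)
  then have "int q dvd T"
    using not_one cong_mult_lcancel prime_imp_coprime q
    by (metis coprime_commute prime_nat_int_transfer)
  moreover have "int q dvd int q ^ k"
    using k by (cases k) auto
  moreover have "{1..int q} = insert (int q) {1..<int q}"
    using \<open>q > 1\<close> by auto
  then have "S k q = int q ^ k + T"
    by (simp add: S_eq_sum_int T_def)
  ultimately show ?thesis
    by simp
qed

lemma prime_dvd_S_self:
  assumes q: "prime q" and "q dvd n" and "q ^ 2 dvd n \<or> \<not> (q - 1) dvd n"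
  shows "int q dvd S n n"
proof -
  obtain c where n: "n = c * q"
    using \<open>q dvd n\<close> by (metis dvdE mult.commute)
  have "int q dvd S n (c * q) - int c * S n q"
    by (rule S_mult_diff_dvd, rule dvd_trans[OF _ dvd_power_diff]) simp
  moreover have "int q dvd int c * S n q"
  proof (cases "q ^ 2 dvd n")
    case True
    then have "q dvd c"
      using n q prime_gt_0_nat by (simp add: power2_eq_square)
    then show ?thesis by simp
  next
    case False
    then show ?thesis
      using assms prime_dvd_S by simp
  qed
  ultimately have "int q dvd (S n (c * q) - int c * S n q) + int c * S n q"
    by (rule dvd_add)
  with n show ?thesis by simp
qed

lemma prime_square_dvd_S_self:
  assumes q: "prime q" and "q ^ 2 dvd n" and "\<not> (q - 1) dvd n"
  shows "int q ^ 2 dvd S n n"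
proof -
  have "q dvd n"
    using \<open>q ^ 2 dvd n\<close> by (simp add: power2_eq_square dvd_mult_left)
  then obtain c where n: "n = c * q"
    by (metis dvdE mult.commute)
  have "int q ^ 2 dvd S n (c * q) - int c * S n q"
    by (rule S_mult_diff_dvd, rule square_dvd_power_diff) (use \<open>q dvd n\<close> in simp_all)
  moreover have "int q dvd int c"
    using n q \<open>q ^ 2 dvd n\<close> prime_gt_0_nat by (simp add: power2_eq_square)
  then have "int q ^ 2 dvd int c * S n q"
    using mult_dvd_mono[OF _ prime_dvd_S[OF assms(1,3)]] by (simp add: power2_eq_square)
  ultimately have "int q ^ 2 dvd (S n (c * q) - int c * S n q) + int c * S n q"
    by (rule dvd_add)
  with n show ?thesis by simp
qed

definition admissible :: "nat \<Rightarrow> nat \<Rightarrow> bool" where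
  "admissible p n \<longleftrightarrow>
     (\<forall>q. prime q \<longrightarrow> q dvd n \<longrightarrow> q \<noteq> p \<longrightarrow> \<not> q ^ 2 dvd n \<and> (q - 1) dvd n) \<and>
     (p ^ 2 dvd n \<longrightarrow> (p - 1) dvd n)"

lemma admissibleD:
  assumes "admissible p n"
  shows "\<And>q. prime q \<Longrightarrow> q dvd n \<Longrightarrow> q \<noteq> p \<Longrightarrow> \<not> q ^ 2 dvd n"
    and "\<And>q. prime q \<Longrightarrow> q dvd n \<Longrightarrow> q \<noteq> p \<Longrightarrow> (q - 1) dvd n"
    and "p ^ 2 dvd n \<Longrightarrow> (p - 1) dvd n"
  using assms unfolding admissible_def by blast+

lemma M_imp_admissible:
  assumes p: "prime p" and "n \<in> M (int p)"
  shows "admissible p n"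
proof -
  have n_dvd: "int n dvd S n n - int p"
    using assms(2) by (simp add: M_def mod_eq_dvd_iff)
  have "\<not> q ^ 2 dvd n \<and> (q - 1) dvd n" if q: "prime q" "q dvd n" "q \<noteq> p" for q
  proof (rule ccontr)
    assume "\<not> ?thesis"
    then have "int q dvd S n n"
      using prime_dvd_S_self q by blast
    moreover have "int q dvd S n n - int p"
      using q(2) n_dvd by (meson dvd_trans int_dvd_int_iff)
    ultimately have "q dvd p"
      using dvd_diff[of "int q" "S n n" "S n n - int p"] by simp
    then show False
      using q p primes_dvd_imp_eq by blast
  qed
  moreover have "(p - 1) dvd n" if "p ^ 2 dvd n"
  proof (rule ccontr)
    assume "\<not> (p - 1) dvd n"
    then have "int p ^ 2 dvd S n n"
      using prime_square_dvd_S_self p that by blast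
    moreover have "int p ^ 2 dvd S n n - int p"
      using that n_dvd by (metis dvd_trans int_dvd_int_iff of_nat_power)
    ultimately have "int (p ^ 2) dvd int p"
      using dvd_diff[of "int p ^ 2" "S n n" "S n n - int p"] by simp
    then have "p ^ 2 \<le> p"
      using p prime_gt_0_nat dvd_imp_le int_dvd_int_iff by blast
    then show False
      using prime_gt_1_nat[OF p] by (simp add: power2_eq_square)
  qed
  ultimately show ?thesis
    unfolding admissible_def by blast
qed

lemma squarefree_eq_prod_prime_factors:
  assumes "squarefree (n :: nat)"
  shows "\<Prod>(prime_factors n) = n"
proof -
  have "n \<noteq> 0"
    using assms by (metis not_squarefree_0)
  have "multiplicity p n = 1" if "p \<in> prime_factors n" for p
    using assms \<open>n \<noteq> 0\<close> that squarefree_factorial_semiring' by blast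
  then have "\<Prod>(prime_factors n) = (\<Prod>p\<in>prime_factors n. p ^ multiplicity p n)"
    by simp
  also have "\<dots> = n"
    using prod_prime_factors[OF \<open>n \<noteq> 0\<close>] by simp
  finally show ?thesis .
qed

lemma prime_2_3_7_43: "prime (2::nat)" "prime (3::nat)" "prime (7::nat)" "prime (43::nat)"
  unfolding prime_nat_iff' by (simp_all add: set_upt[symmetric] upt_rec)

lemma prime_dvd_1806:
  assumes r: "prime (r :: nat)" and "r dvd 1806"
  shows "r \<in> {2, 3, 7, 43}"
proof -
  have "r dvd 2 * (3 * (7 * 43))"
    using assms(2) by simp
  then show ?thesis
    using r prime_2_3_7_43 by (metis insertCI prime_dvd_mult_iff primes_dvd_imp_eq)
qed

lemma squarefree_1806: "squarefree (1806 :: nat)"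
proof (subst squarefree_factorial_semiring, simp, intro allI impI notI)
  fix r :: nat
  assume "prime r" "r ^ 2 dvd 1806"
  then have "r \<in> {2, 3, 7, 43}"
    using prime_dvd_1806 by (metis dvd_mult_left power2_eq_square)
  with \<open>r ^ 2 dvd 1806\<close> show False
    by auto
qed

lemma dvd_1806_cases:
  assumes "d dvd (1806 :: nat)"
  shows "d \<in> {1, 2, 3, 6, 7, 14, 21, 42, 43, 86, 129, 258, 301, 602, 903, 1806}"
proof -
  have "squarefree d"
    using assms squarefree_1806 squarefree_mono by blast
  moreover have "prime_factors d \<subseteq> {2, 3, 7, 43}"
  proof
    fix r
    assume "r \<in> prime_factors d"
    then show "r \<in> {2, 3, 7, 43}"
      using assms by (meson dvd_trans in_prime_factors_iff prime_dvd_1806)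
  qed
  ultimately have "d \<in> (\<lambda>A. \<Prod>A) ` Pow {2, 3, 7, 43}"
    using squarefree_eq_prod_prime_factors by (metis Pow_iff image_eqI)
  then show ?thesis
    by (simp add: Pow_insert image_Un image_image) blast
qed

lemma not_prime_if_proper_divisor: "a dvd x \<Longrightarrow> 1 < a \<Longrightarrow> a < x \<Longrightarrow> \<not> prime (x :: nat)"
  by (auto simp: prime_nat_iff)

lemma prime_pred_dvd_1806:
  assumes x: "prime (x :: nat)" and "(x - 1) dvd 1806"
  shows "x \<in> {2, 3, 7, 43}"
proof -
  have "x \<ge> 2"
    using x prime_ge_2_nat by blast
  then obtain y where y: "x = Suc y"
    using not0_implies_Suc by fastforce
  then have "y \<in> {1, 2, 3, 6, 7, 14, 21, 42, 43, 86, 129, 258, 301, 602, 903, 1806}"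
    using dvd_1806_cases[OF assms(2)] by simp
  then have "x \<in> {2, 3, 4, 7, 8, 15, 22, 43, 44, 87, 130, 259, 302, 603, 904, 1807}"
    using y by auto
  moreover have "odd x \<or> x = 2"
    using x prime_odd_nat \<open>x \<ge> 2\<close> by force
  ultimately have "x \<in> {2, 3, 7, 43, 15, 87, 259, 603, 1807}"
    by auto
  moreover have "\<not> prime (15::nat)" "\<not> prime (87::nat)" "\<not> prime (603::nat)"
    by (rule not_prime_if_proper_divisor[of 3]; simp)+
  moreover have "\<not> prime (259::nat)"
    by (rule not_prime_if_proper_divisor[of 7]) simp_all
  moreover have "\<not> prime (1807::nat)"
    by (rule not_prime_if_proper_divisor[of 13]) simp_all
  ultimately show ?thesis
    using x by blast
qed

lemma admissible_divisor_dvd_1806: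
  assumes adm: "admissible p n" and "g dvd n" "g > 0" "\<not> p dvd g"
    and factors: "\<And>r. prime r \<Longrightarrow> r dvd g \<Longrightarrow> r \<in> {2, 3, 7, 43}"
  shows "g dvd 1806"
proof -
  have "\<not> r ^ 2 dvd g" if "prime r" for r
  proof
    assume "r ^ 2 dvd g"
    then have "r dvd g"
      by (simp add: power2_eq_square dvd_mult_left)
    moreover have "r ^ 2 dvd n"
      using \<open>r ^ 2 dvd g\<close> \<open>g dvd n\<close> by (rule dvd_trans)
    moreover have "r dvd n"
      using \<open>r dvd g\<close> \<open>g dvd n\<close> by (rule dvd_trans)
    moreover have "r \<noteq> p"
      using \<open>r dvd g\<close> \<open>\<not> p dvd g\<close> by blast
    ultimately show False
      using admissibleD(1)[OF adm that] by blast
  qed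
  then have "squarefree g"
    using \<open>g > 0\<close> by (simp add: squarefree_factorial_semiring)
  moreover have "prime_factors g \<subseteq> {2, 3, 7, 43}"
    using factors by (auto simp: in_prime_factors_iff)
  then have "\<Prod>(prime_factors g) dvd \<Prod>{2, 3, 7, 43 :: nat}"
    by (rule prod_dvd_prod_subset[rotated]) simp
  ultimately show ?thesis
    by (simp add: squarefree_eq_prod_prime_factors)
qed

lemma admissible_not_square_dvd:
  assumes p: "prime p" "p \<notin> {2, 3, 7, 43}" and adm: "admissible p n"
    and smaller: "\<And>r. prime r \<Longrightarrow> r dvd n \<Longrightarrow> r < p \<Longrightarrow> r \<in> {2, 3, 7, 43}"
  shows "\<not> p ^ 2 dvd n"
proof
  assume "p ^ 2 dvd n"
  then have "(p - 1) dvd n"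
    by (rule admissibleD(3)[OF adm])
  have "p > 1"
    using p prime_gt_1_nat by blast
  have "(p - 1) dvd 1806"
  proof (rule admissible_divisor_dvd_1806[OF adm \<open>(p - 1) dvd n\<close>])
    show "p - 1 > 0" "\<not> p dvd p - 1"
      using \<open>p > 1\<close> by (simp_all add: nat_dvd_not_less)
    show "r \<in> {2, 3, 7, 43}" if "prime r" "r dvd p - 1" for r
    proof (rule smaller[OF that(1)])
      show "r dvd n"
        using \<open>r dvd p - 1\<close> \<open>(p - 1) dvd n\<close> by (rule dvd_trans)
      have "r \<le> p - 1"
        using \<open>r dvd p - 1\<close> \<open>p > 1\<close> by (simp add: dvd_imp_le)
      then show "r < p"
        using \<open>p > 1\<close> by simp
    qed
  qed
  then show False
    using prime_pred_dvd_1806 p by blast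
qed

lemma admissible_prime_factor:
  assumes p: "prime p" "p \<notin> {2, 3, 7, 43}"
    and no_primes: "\<forall>m\<in>{2, 6, 14, 42, 86, 258, 602, 1806::nat}. \<not> prime (1 + m * p)"
    and adm: "admissible p n"
  shows "prime q \<Longrightarrow> q dvd n \<Longrightarrow> q \<noteq> p \<Longrightarrow> q \<in> {2, 3, 7, 43}"
proof (induction q rule: less_induct)
  case (less q)
  have "(q - 1) dvd n"
    using admissibleD(2)[OF adm less.prems] .
  have "q \<ge> 2"
    using less.prems(1) prime_ge_2_nat by blast
  have small: "g dvd 1806" if "g dvd q - 1" "\<not> p dvd g" for g
  proof (rule admissible_divisor_dvd_1806[OF adm _ _ that(2)])
    show "g dvd n"
      using that(1) \<open>(q - 1) dvd n\<close> by (rule dvd_trans)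
    show "g > 0"
      using that(1) \<open>q \<ge> 2\<close> by (cases "g = 0") auto
    show "r \<in> {2, 3, 7, 43}" if "prime r" "r dvd g" for r
    proof (rule less.IH)
      have "r dvd q - 1"
        using that(2) \<open>g dvd q - 1\<close> by (rule dvd_trans)
      then have "r \<le> q - 1"
        using \<open>q \<ge> 2\<close> by (simp add: dvd_imp_le)
      then show "r < q"
        using \<open>q \<ge> 2\<close> by simp
      show "r dvd n"
        using \<open>r dvd q - 1\<close> \<open>(q - 1) dvd n\<close> by (rule dvd_trans)
      show "r \<noteq> p"
        using that(2) \<open>\<not> p dvd g\<close> by blast
    qed fact
  qed
  show ?case
  proof (rule ccontr)
    assume "q \<notin> {2, 3, 7, 43}"
    then have "q > 2"
      using \<open>q \<ge> 2\<close> by auto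
    consider "\<not> p dvd q - 1" | g where "q - 1 = p * g" "p dvd g" | g where "q - 1 = p * g" "\<not> p dvd g"
      by (metis dvdE)
    then show False
    proof cases
      case 1
      then have "q \<in> {2, 3, 7, 43}"
        using small[OF dvd_refl] prime_pred_dvd_1806 less.prems(1) by blast
      with \<open>q \<notin> {2, 3, 7, 43}\<close> show False
        by simp
    next
      case (2 g)
      then have "p ^ 2 dvd q - 1"
        by (simp add: power2_eq_square)
      then have "p ^ 2 dvd n" and "p ^ 2 \<le> q - 1"
        using \<open>(q - 1) dvd n\<close> \<open>q > 2\<close> by (simp_all add: dvd_trans dvd_imp_le)
      moreover have "p < p ^ 2"
        using prime_gt_1_nat[OF p(1)] by (simp add: power2_eq_square)
      ultimately have "p < q"
        by simp
      with less.IH have "\<not> p ^ 2 dvd n"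
        by (intro admissible_not_square_dvd[OF p adm]) simp
      with \<open>p ^ 2 dvd n\<close> show False
        by simp
    next
      case (3 g)
      then have "g dvd 1806"
        using small by simp
      have q_eq: "q = 1 + g * p"
        using 3 \<open>q > 2\<close> by (simp add: mult.commute)
      have "odd p"
        using p prime_odd_nat prime_ge_2_nat by (metis insertCI le_neq_implies_less)
      moreover have "odd q"
        using less.prems(1) \<open>q > 2\<close> by (rule prime_odd_nat)
      ultimately have "even g"
        using q_eq by auto
      then have "g \<in> {2, 6, 14, 42, 86, 258, 602, 1806}"
        using dvd_1806_cases[OF \<open>g dvd 1806\<close>] by auto
      then show False
        using no_primes less.prems(1) q_eq by blast
    qed
  qed
qed

lemma admissible_cases:
  assumes p: "prime p" "p \<notin> {2, 3, 7, 43}"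
    and no_primes: "\<forall>m\<in>{2, 6, 14, 42, 86, 258, 602, 1806::nat}. \<not> prime (1 + m * p)"
    and adm: "admissible p n" and "n > 0"
  shows "n \<in> {1, 2, 6, 42, 1806} \<union> scale_set p {1, 2, 6, 42, 1806}"
proof -
  have factors: "q \<in> {2, 3, 7, 43}" if "prime q" "q dvd n" "q \<noteq> p" for q
    using admissible_prime_factor[OF p no_primes adm] that .
  then have "\<not> p ^ 2 dvd n"
    using admissible_not_square_dvd[OF p adm] by blast
  define m where "m = (if p dvd n then n div p else n)"
  have n_eq: "n = m \<or> n = p * m"
    by (auto simp: m_def)
  have "\<not> p dvd m"
    using \<open>\<not> p ^ 2 dvd n\<close> by (auto simp: m_def power2_eq_square elim!: dvdE)
  have "m dvd n" "m > 0"
    using n_eq \<open>n > 0\<close> by auto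
  have m_factors: "q dvd n" "q \<noteq> p" "q \<in> {2, 3, 7, 43}" if "prime q" "q dvd m" for q
  proof -
    show "q dvd n"
      using \<open>q dvd m\<close> \<open>m dvd n\<close> by (rule dvd_trans)
    show "q \<noteq> p"
      using \<open>q dvd m\<close> \<open>\<not> p dvd m\<close> by blast
    show "q \<in> {2, 3, 7, 43}"
      using factors[OF \<open>prime q\<close> \<open>q dvd n\<close> \<open>q \<noteq> p\<close>] .
  qed
  have "m dvd 1806"
    using admissible_divisor_dvd_1806[OF adm \<open>m dvd n\<close> \<open>m > 0\<close> \<open>\<not> p dvd m\<close>] m_factors(3) .
  have pred_dvd: "(q - 1) dvd m" if "prime q" "q dvd m" for q
  proof -
    have "(q - 1) dvd 1806"
      using m_factors(3)[OF that] by auto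
    then have "\<not> p dvd q - 1"
      using p prime_dvd_1806 dvd_trans by metis
    then have "coprime p (q - 1)"
      using p(1) by (simp add: prime_imp_coprime)
    moreover have "(q - 1) dvd n"
      using admissibleD(2)[OF adm that(1) m_factors(1,2)[OF that]] .
    ultimately show ?thesis
      using n_eq by (metis coprime_commute coprime_dvd_mult_right_iff)
  qed
  then have "m \<in> {1, 2, 6, 42, 1806}"
    using dvd_1806_cases[OF \<open>m dvd 1806\<close>] pred_dvd[OF prime_2_3_7_43(2)]
      pred_dvd[OF prime_2_3_7_43(3)] pred_dvd[OF prime_2_3_7_43(4)] by auto
  with n_eq show ?thesis
    by (auto simp: scale_set_def)
qed

theorem mainTheorem12:
  fixes p :: nat
  assumes "prime p"
    and "p \<notin> {2, 3, 7, 43}"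
    and "\<forall>m\<in>{2, 6, 14, 42, 86, 258, 602, 1806::nat}. \<not> prime (1 + m * p)"
  shows "M (int p) \<subseteq> {1, 2, 6, 42, 1806} \<union> scale_set p {1, 2, 6, 42, 1806}
         \<and> finite (M (int p))"
proof -
  have "M (int p) \<subseteq> {1, 2, 6, 42, 1806} \<union> scale_set p {1, 2, 6, 42, 1806}"
  proof
    fix n
    assume "n \<in> M (int p)"
    then have "admissible p n" "n > 0"
      using M_imp_admissible[OF assms(1)] by (auto simp: M_def)
    then show "n \<in> {1, 2, 6, 42, 1806} \<union> scale_set p {1, 2, 6, 42, 1806}"
      using admissible_cases[OF assms] by blast
  qed
  moreover have "finite ({1, 2, 6, 42, 1806} \<union> scale_set p {1, 2, 6, 42, 1806})"
    by (simp add: scale_set_def)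
  ultimately show ?thesis
    using finite_subset by blast
qed

end
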